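(* Let $\alpha>0$. Consider the model $Y_i=f(x_i)+V_i^{1/2}\xi_i$, $i=1,\dots,n$, $x_i=i/n$, with $\xi_1,\dots,\xi_n\overset{iid}{\sim}N(0,1)$, $f\in\mathcal{H}_\alpha(M)$ and $V=(V_1,\dots,V_n)\in[0,M]^n$. Let $\tilde R_i=Y_{i+2}-Y_i$ ($1\le i\le n-2$) and $$\hat T_2=\frac1n\sum_{i=1}^{n-3}\left(\tfrac13(\tilde R_{i+1}^4+\tilde R_i^4)-2\tilde R_{i+1}^2\tilde R_i^2\right).$$ With $\tilde W_i=V_{i+2}+V_i$, $\tilde\delta_i=f(x_{i+2})-f(x_i)$ and $\tilde T_2=\frac1n\sum_{i=1}^{n-3}(\tilde W_{i+1}+\tilde\delta_{i+1}^2-\tilde W_i-\tilde\delta_i^2)^2$, we have $E_{f,V}\big(|\hat T_2-\tilde T_2|^2\big)\lesssim n^{-1}+n^{-8\alpha}$, with an implicit constant not depending on $n,f,V$.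
   Context: $\mathcal{H}_\alpha(M)$: functions $g:[0,1]\to\mathbb{R}$ with $|g^{(\lfloor\alpha\rfloor)}(x)-g^{(\lfloor\alpha\rfloor)}(y)|\le M|x-y|^{\alpha-\lfloor\alpha\rfloor}$ for all $x,y$ and $\|g^{(k)}\|_\infty\le M$ for $k=0,\dots,\lfloor\alpha\rfloor$; $M$ is a fixed sufficiently large constant. $E_{f,V}$ is expectation under the model. *)

theory Defs
  imports "HOL-Probability.Probability"
begin

definition holder_class :: "real \<Rightarrow> real \<Rightarrow> (real \<Rightarrow> real) set" where
  "holder_class \<alpha> M = {g. \<exists>D :: nat \<Rightarrow> real \<Rightarrow> real.
      (\<forall>x\<in>{0..1}. D 0 x = g x) \<and>
      (\<forall>j < nat \<lfloor>\<alpha>\<rfloor>. \<forall>x\<in>{0..1}.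
          (D j has_real_derivative D (Suc j) x) (at x within {0..1})) \<and>
      (\<forall>j \<le> nat \<lfloor>\<alpha>\<rfloor>. \<forall>x\<in>{0..1}. \<bar>D j x\<bar> \<le> M) \<and>
      (\<forall>x\<in>{0..1}. \<forall>y\<in>{0..1}.
          \<bar>D (nat \<lfloor>\<alpha>\<rfloor>) x - D (nat \<lfloor>\<alpha>\<rfloor>) y\<bar> \<le> M * \<bar>x - y\<bar> powr (\<alpha> - of_int \<lfloor>\<alpha>\<rfloor>))}"

definition noise_measure :: "nat \<Rightarrow> (nat \<Rightarrow> real) measure" where
  "noise_measure n = PiM {1..n} (\<lambda>_. density lborel std_normal_density)"

definition obsY :: "nat \<Rightarrow> (real \<Rightarrow> real) \<Rightarrow> (nat \<Rightarrow> real) \<Rightarrow> (nat \<Rightarrow> real) \<Rightarrow> nat \<Rightarrow> real" where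
  "obsY n f V \<xi> i = f (real i / real n) + sqrt (V i) * \<xi> i"

definition Rt :: "nat \<Rightarrow> (real \<Rightarrow> real) \<Rightarrow> (nat \<Rightarrow> real) \<Rightarrow> (nat \<Rightarrow> real) \<Rightarrow> nat \<Rightarrow> real" where
  "Rt n f V \<xi> i = obsY n f V \<xi> (i + 2) - obsY n f V \<xi> i"

definition T2_hat :: "nat \<Rightarrow> (real \<Rightarrow> real) \<Rightarrow> (nat \<Rightarrow> real) \<Rightarrow> (nat \<Rightarrow> real) \<Rightarrow> real" where
  "T2_hat n f V \<xi> = (1 / real n) * (\<Sum>i = 1..n - 3.
      (1/3) * (Rt n f V \<xi> (i+1) ^ 4 + Rt n f V \<xi> i ^ 4)
      - 2 * Rt n f V \<xi> (i+1) ^ 2 * Rt n f V \<xi> i ^ 2)"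

definition Wt :: "(nat \<Rightarrow> real) \<Rightarrow> nat \<Rightarrow> real" where
  "Wt V i = V (i + 2) + V i"

definition deltat :: "nat \<Rightarrow> (real \<Rightarrow> real) \<Rightarrow> nat \<Rightarrow> real" where
  "deltat n f i = f (real (i + 2) / real n) - f (real i / real n)"

definition T2_tilde :: "nat \<Rightarrow> (real \<Rightarrow> real) \<Rightarrow> (nat \<Rightarrow> real) \<Rightarrow> real" where
  "T2_tilde n f V = (1 / real n) * (\<Sum>i = 1..n - 3.
      (Wt V (i+1) + (deltat n f (i+1))^2 - Wt V i - (deltat n f i)^2) ^ 2)"

end

theory Submission
  imports Defs
begin

text \<open>
  Let g_i and h_i be the i-th summands of T2_hat and T2_tilde, so that
  n (T2_hat - T2_tilde) = sum (g_i - E g_i) + sum (E g_i - h_i).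
  Since R_i = delta_i + sqrt(V_(i+2)) xi_(i+2) - sqrt(V_i) xi_i and R_i, R_(i+1) involve disjoint
  noise coordinates, the Gaussian moments E xi^2 = 1 and E xi^4 = 3 give
  E g_i = h_i - 2/3 (delta_(i+1)^4 + delta_i^4), and the Hoelder condition makes
  |delta_i| = O(n^(-min(alpha,1))); so the bias term is O(n^(1 - 4 min(alpha,1))).
  The summand g_i depends only on xi_i, ..., xi_(i+3), hence g_i and g_j are independent for
  |i - j| > 3; as the eighth moments of the R_i are bounded uniformly, the centred sum has second
  moment O(n). Together, E |T2_hat - T2_tilde|^2 = O(n^(-1) + n^(-8 min(alpha,1))), and
  n^(-8) <= n^(-1) covers the case alpha > 1.
\<close>

section \<open>Random variables with finite moments\<close>

definition finite_moments :: "'a measure \<Rightarrow> ('a \<Rightarrow> real) \<Rightarrow> bool" where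
  "finite_moments M X \<longleftrightarrow> X \<in> borel_measurable M \<and> (\<forall>k. integrable M (\<lambda>x. \<bar>X x\<bar> ^ k))"

lemma finite_moments_measurable: "finite_moments M X \<Longrightarrow> X \<in> borel_measurable M"
  by (simp add: finite_moments_def)

lemma finite_moments_integrable_power: "finite_moments M X \<Longrightarrow> integrable M (\<lambda>x. \<bar>X x\<bar> ^ k)"
  by (simp add: finite_moments_def)

lemma finite_moments_integrable:
  assumes "finite_moments M X"
  shows "integrable M X"
proof -
  have "integrable M (\<lambda>x. \<bar>X x\<bar>)"
    using finite_moments_integrable_power[OF assms, of 1] by simp
  then show ?thesis
    using integrable_abs_iff[OF finite_moments_measurable[OF assms]] by simp
qed

lemma finite_moments_const: "finite_measure M \<Longrightarrow> finite_moments M (\<lambda>_. c)"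
  by (simp add: finite_moments_def finite_measure.integrable_const)

lemma abs_add_power_le: "\<bar>a + b\<bar> ^ k \<le> 2 ^ k * (\<bar>a\<bar> ^ k + \<bar>b\<bar> ^ k)" for a b :: real
proof -
  have "\<bar>a + b\<bar> ^ k \<le> (2 * max \<bar>a\<bar> \<bar>b\<bar>) ^ k"
    by (rule power_mono) auto
  also have "\<dots> = 2 ^ k * max \<bar>a\<bar> \<bar>b\<bar> ^ k"
    by (simp add: power_mult_distrib)
  also have "max \<bar>a\<bar> \<bar>b\<bar> ^ k \<le> \<bar>a\<bar> ^ k + \<bar>b\<bar> ^ k"
    by (auto simp: max_def)
  finally show ?thesis by simp
qed

lemma abs_mult_power_le: "\<bar>a * b\<bar> ^ k \<le> \<bar>a\<bar> ^ (2 * k) + \<bar>b\<bar> ^ (2 * k)" for a b :: real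
proof -
  have "0 \<le> (\<bar>a\<bar> ^ k - \<bar>b\<bar> ^ k)\<^sup>2"
    by simp
  then have "2 * (\<bar>a\<bar> ^ k * \<bar>b\<bar> ^ k) \<le> (\<bar>a\<bar> ^ k)\<^sup>2 + (\<bar>b\<bar> ^ k)\<^sup>2"
    by (simp add: power2_diff mult.assoc)
  moreover have "0 \<le> \<bar>a\<bar> ^ k * \<bar>b\<bar> ^ k"
    by simp
  ultimately have "\<bar>a\<bar> ^ k * \<bar>b\<bar> ^ k \<le> (\<bar>a\<bar> ^ k)\<^sup>2 + (\<bar>b\<bar> ^ k)\<^sup>2"
    by linarith
  then show ?thesis
    by (simp add: abs_mult power_mult_distrib power_mult mult.commute)
qed

lemma finite_moments_bound:
  assumes "finite_moments M X" "finite_moments M Y" and [measurable]: "Z \<in> borel_measurable M"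
    and "\<And>x k. \<bar>Z x\<bar> ^ k \<le> c k * (\<bar>X x\<bar> ^ d k + \<bar>Y x\<bar> ^ d k)"
  shows "finite_moments M Z"
  unfolding finite_moments_def
proof (intro conjI allI assms(3))
  fix k
  show "integrable M (\<lambda>x. \<bar>Z x\<bar> ^ k)"
  proof (rule Bochner_Integration.integrable_bound)
    show "integrable M (\<lambda>x. c k * (\<bar>X x\<bar> ^ d k + \<bar>Y x\<bar> ^ d k))"
      using assms(1,2) by (intro integrable_mult_right Bochner_Integration.integrable_add
          finite_moments_integrable_power)
    show "AE x in M. norm (\<bar>Z x\<bar> ^ k) \<le> norm (c k * (\<bar>X x\<bar> ^ d k + \<bar>Y x\<bar> ^ d k))"
    proof (intro AE_I2)
      fix x
      have "norm (\<bar>Z x\<bar> ^ k) = \<bar>Z x\<bar> ^ k"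
        by simp
      also have "\<dots> \<le> c k * (\<bar>X x\<bar> ^ d k + \<bar>Y x\<bar> ^ d k)"
        by (rule assms(4))
      also have "\<dots> \<le> norm (c k * (\<bar>X x\<bar> ^ d k + \<bar>Y x\<bar> ^ d k))"
        by (simp only: real_norm_def abs_ge_self)
      finally show "norm (\<bar>Z x\<bar> ^ k) \<le> norm (c k * (\<bar>X x\<bar> ^ d k + \<bar>Y x\<bar> ^ d k))" .
    qed
  qed measurable
qed

lemma finite_moments_add:
  assumes "finite_moments M X" "finite_moments M Y"
  shows "finite_moments M (\<lambda>x. X x + Y x)"
proof (rule finite_moments_bound[OF assms])
  show "(\<lambda>x. X x + Y x) \<in> borel_measurable M"
    using assms by (intro borel_measurable_add finite_moments_measurable)
qed (rule abs_add_power_le)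

lemma finite_moments_mult:
  assumes "finite_moments M X" "finite_moments M Y"
  shows "finite_moments M (\<lambda>x. X x * Y x)"
proof (rule finite_moments_bound[OF assms])
  show "(\<lambda>x. X x * Y x) \<in> borel_measurable M"
    using assms by (intro borel_measurable_times finite_moments_measurable)
  show "\<bar>X x * Y x\<bar> ^ k \<le> 1 * (\<bar>X x\<bar> ^ (2 * k) + \<bar>Y x\<bar> ^ (2 * k))" for x k
    using abs_mult_power_le by simp
qed

lemma finite_moments_diff:
  assumes "finite_moments M X" "finite_moments M Y"
  shows "finite_moments M (\<lambda>x. X x - Y x)"
proof (rule finite_moments_bound[OF assms])
  show "(\<lambda>x. X x - Y x) \<in> borel_measurable M"
    using assms by (intro borel_measurable_diff finite_moments_measurable)
  show "\<bar>X x - Y x\<bar> ^ k \<le> 2 ^ k * (\<bar>X x\<bar> ^ k + \<bar>Y x\<bar> ^ k)" for x k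
    using abs_add_power_le[of "X x" "- Y x" k] by simp
qed

lemma finite_moments_power:
  assumes "finite_measure M" "finite_moments M X"
  shows "finite_moments M (\<lambda>x. X x ^ k)"
proof (induction k)
  case 0
  show ?case using finite_moments_const[OF assms(1)] by simp
next
  case (Suc k)
  show ?case unfolding power_Suc by (rule finite_moments_mult[OF assms(2) Suc])
qed

lemma finite_moments_sum:
  assumes "finite_measure M" "\<And>i. i \<in> I \<Longrightarrow> finite_moments M (X i)"
  shows "finite_moments M (\<lambda>x. \<Sum>i\<in>I. X i x)"
  using assms(2)
proof (induction I rule: infinite_finite_induct)
  case (insert i I)
  then show ?case by (simp add: finite_moments_add)
qed (simp_all add: finite_moments_const[OF assms(1)])

section \<open>Independence of coordinate blocks in product spaces\<close>

lemma integral_PiM_component: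
  fixes g :: "'a \<Rightarrow> real"
  assumes "\<And>i. i \<in> I \<Longrightarrow> prob_space (M i)" "i \<in> I" "g \<in> borel_measurable (M i)"
  shows "(\<integral>x. g (x i) \<partial>PiM I M) = integral\<^sup>L (M i) g"
proof -
  have "distr (PiM I M) (M i) (\<lambda>x. x i) = M i"
    by (rule distr_PiM_component[OF assms(1,2)])
  then show ?thesis
    using integral_distr[OF measurable_component_singleton[OF assms(2), of M] assms(3)] by simp
qed

lemma finite_moments_PiM_component:
  assumes "\<And>i. i \<in> I \<Longrightarrow> prob_space (M i)" "i \<in> I" "finite_moments (M i) g"
  shows "finite_moments (PiM I M) (\<lambda>x. g (x i))"
  unfolding finite_moments_def
proof (intro conjI allI)
  note component = measurable_component_singleton[OF assms(2), of M]
  show "(\<lambda>x. g (x i)) \<in> borel_measurable (PiM I M)"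
    using measurable_compose[OF component finite_moments_measurable[OF assms(3)]] .
  fix k
  have "(\<lambda>y. \<bar>g y\<bar> ^ k) \<in> borel_measurable (M i)"
    using finite_moments_measurable[OF assms(3)] by measurable
  moreover have "distr (PiM I M) (M i) (\<lambda>x. x i) = M i"
    by (rule distr_PiM_component[OF assms(1,2)])
  then have "integrable (distr (PiM I M) (M i) (\<lambda>x. x i)) (\<lambda>y. \<bar>g y\<bar> ^ k)"
    using finite_moments_integrable_power[OF assms(3)] by simp
  ultimately show "integrable (PiM I M) (\<lambda>x. \<bar>g (x i)\<bar> ^ k)"
    using integrable_distr_eq[OF component] by blast
qed

lemma indep_vars_PiM_components:
  assumes "\<And>i. i \<in> I \<Longrightarrow> prob_space (M i)"
  shows "prob_space.indep_vars (PiM I M) M (\<lambda>i x. x i) I"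
proof -
  interpret P: prob_space "PiM I M"
    by (rule prob_space_PiM[OF assms])
  have component: "P.random_variable (M i) (\<lambda>x. x i)" if "i \<in> I" for i
    using that by (rule measurable_component_singleton)
  show ?thesis
  proof (cases "I = {}")
    case True
    show ?thesis
      unfolding P.indep_vars_def P.indep_sets_def using True by simp
  next
    case False
    have "distr (PiM I M) (PiM I M) (\<lambda>x. \<lambda>i\<in>I. x i) = distr (PiM I M) (PiM I M) (\<lambda>x. x)"
      by (intro distr_cong) (auto simp: space_PiM)
    also have "\<dots> = (\<Pi>\<^sub>M i\<in>I. distr (PiM I M) (M i) (\<lambda>x. x i))"
    proof -
      have "(\<Pi>\<^sub>M i\<in>I. distr (PiM I M) (M i) (\<lambda>x. x i)) = PiM I M"
        by (intro PiM_cong refl distr_PiM_component[OF assms])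
      then show ?thesis by (simp add: distr_id)
    qed
    finally show ?thesis
      by (subst P.indep_vars_iff_distr_eq_PiM'[OF False component])
  qed
qed

lemma integral_PiM_mult_disjoint:
  fixes X Y :: "('i \<Rightarrow> 'a) \<Rightarrow> real"
  assumes M: "\<And>i. i \<in> I \<Longrightarrow> prob_space (M i)"
    and AB: "A \<inter> B = {}" "A \<subseteq> I" "B \<subseteq> I"
    and X: "X \<in> borel_measurable (PiM A M)" "\<And>x. X (restrict x A) = X x" "integrable (PiM I M) X"
    and Y: "Y \<in> borel_measurable (PiM B M)" "\<And>x. Y (restrict x B) = Y x" "integrable (PiM I M) Y"
  shows "(\<integral>x. X x * Y x \<partial>PiM I M) = (\<integral>x. X x \<partial>PiM I M) * (\<integral>x. Y x \<partial>PiM I M)"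
proof -
  interpret P: prob_space "PiM I M"
    by (rule prob_space_PiM[OF M])
  have "P.indep_var (PiM A M) (\<lambda>x. restrict (\<lambda>i. x i) A) (PiM B M) (\<lambda>x. restrict (\<lambda>i. x i) B)"
    by (rule P.indep_var_restrict[OF indep_vars_PiM_components[OF M] AB])
  from P.indep_var_compose[OF this X(1) Y(1)]
  have "P.indep_var borel X borel Y"
    by (simp add: comp_def X(2) Y(2))
  then show ?thesis
    using P.indep_var_lebesgue_integral X(3) Y(3) by blast
qed

section \<open>Standard normal coordinates\<close>

lemma prob_space_std_normal_distribution: "prob_space std_normal_distribution"
  by (rule prob_space_normal_density) simp

lemma finite_moments_std_normal_distribution: "finite_moments std_normal_distribution (\<lambda>x. x)"
  unfolding finite_moments_def
  by (auto simp: normal_density_nonneg integrable_std_normal_moment_abs integrable_density)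

definition std_normal_moment :: "nat \<Rightarrow> real" where
  "std_normal_moment k = (\<integral>x. x ^ k \<partial>std_normal_distribution)"

lemma std_normal_moment_values:
  "std_normal_moment 0 = 1" "std_normal_moment 1 = 0" "std_normal_moment 2 = 1"
  "std_normal_moment 3 = 0" "std_normal_moment 4 = 3" "std_normal_moment 8 = 105"
  using std_normal_distribution_even_moments(1)[of 0] std_normal_distribution_even_moments(1)[of 1]
    std_normal_distribution_even_moments(1)[of 2] std_normal_distribution_even_moments(1)[of 4]
    integral_std_normal_distribution_moment_odd[of 1] integral_std_normal_distribution_moment_odd[of 3]
  by (simp_all add: std_normal_moment_def fact_numeral)

lemma integral_std_normal_coordinate_power:
  "a \<in> I \<Longrightarrow> (\<integral>x. x a ^ j \<partial>PiM I (\<lambda>_. std_normal_distribution)) = std_normal_moment j"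
  unfolding std_normal_moment_def
  by (rule integral_PiM_component) (auto simp: prob_space_std_normal_distribution)

lemma finite_moments_std_normal_coordinate_power:
  "a \<in> I \<Longrightarrow> finite_moments (PiM I (\<lambda>_. std_normal_distribution)) (\<lambda>x. x a ^ j)"
  by (intro finite_moments_PiM_component finite_moments_power finite_moments_std_normal_distribution
      prob_space.finite_measure prob_space_std_normal_distribution)

lemma integral_std_normal_coordinates_power_mult:
  assumes "a \<in> I" "b \<in> I" "a \<noteq> b"
  shows "(\<integral>x. x a ^ j * x b ^ l \<partial>PiM I (\<lambda>_. std_normal_distribution)) =
    std_normal_moment j * std_normal_moment l"
proof -
  have "(\<lambda>x. x a ^ j) \<in> borel_measurable (PiM {a} (\<lambda>_. std_normal_distribution))"
    "(\<lambda>x. x b ^ l) \<in> borel_measurable (PiM {b} (\<lambda>_. std_normal_distribution))"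
    using measurable_component_singleton[of _ "{_}" "\<lambda>_. std_normal_distribution"] by measurable
  then show ?thesis
    using assms by (subst integral_PiM_mult_disjoint[where A = "{a}" and B = "{b}"])
      (auto simp: prob_space_std_normal_distribution integral_std_normal_coordinate_power
        finite_moments_integrable finite_moments_std_normal_coordinate_power)
qed

lemma trinomial_expansion:
  fixes d p q u v :: "'a :: comm_semiring_1"
  shows "(d + p * u + q * v) ^ N = (\<Sum>k\<le>N. \<Sum>j\<le>k.
    of_nat (N choose k) * of_nat (k choose j) * d ^ (N - k) * p ^ j * q ^ (k - j) * (u ^ j * v ^ (k - j)))"
proof -
  have "(d + p * u + q * v) ^ N = (\<Sum>k\<le>N. of_nat (N choose k) * (p * u + q * v) ^ k * d ^ (N - k))"
    using binomial_ring[of "p * u + q * v" d N] by (simp add: ac_simps)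
  also have "\<dots> = (\<Sum>k\<le>N. of_nat (N choose k) *
      (\<Sum>j\<le>k. of_nat (k choose j) * (p * u) ^ j * (q * v) ^ (k - j)) * d ^ (N - k))"
    by (simp only: binomial_ring)
  also have "\<dots> = (\<Sum>k\<le>N. \<Sum>j\<le>k.
      of_nat (N choose k) * of_nat (k choose j) * d ^ (N - k) * p ^ j * q ^ (k - j) * (u ^ j * v ^ (k - j)))"
    by (simp add: sum_distrib_left sum_distrib_right power_mult_distrib ac_simps)
  finally show ?thesis .
qed

lemma integral_std_normal_linear_form_power:
  assumes "a \<in> I" "b \<in> I" "a \<noteq> b"
  shows "(\<integral>x. (d + p * x a + q * x b) ^ N \<partial>PiM I (\<lambda>_. std_normal_distribution)) =
    (\<Sum>k\<le>N. \<Sum>j\<le>k. of_nat (N choose k) * of_nat (k choose j) * d ^ (N - k) * p ^ j * q ^ (k - j) *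
      (std_normal_moment j * std_normal_moment (k - j)))"
proof -
  let ?c = "\<lambda>k j. of_nat (N choose k) * of_nat (k choose j) * d ^ (N - k) * p ^ j * q ^ (k - j) :: real"
  have integrable: "integrable (PiM I (\<lambda>_. std_normal_distribution)) (\<lambda>x. ?c k j * (x a ^ j * x b ^ (k - j)))"
    for k j
    using assms by (intro integrable_mult_right finite_moments_integrable finite_moments_mult
        finite_moments_std_normal_coordinate_power)
  have "(\<integral>x. (d + p * x a + q * x b) ^ N \<partial>PiM I (\<lambda>_. std_normal_distribution)) =
    (\<Sum>k\<le>N. \<integral>x. (\<Sum>j\<le>k. ?c k j * (x a ^ j * x b ^ (k - j))) \<partial>PiM I (\<lambda>_. std_normal_distribution))"
    unfolding trinomial_expansion
    by (intro Bochner_Integration.integral_sum Bochner_Integration.integrable_sum integrable)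
  also have "\<dots> = (\<Sum>k\<le>N. \<Sum>j\<le>k. \<integral>x. ?c k j * (x a ^ j * x b ^ (k - j)) \<partial>PiM I (\<lambda>_. std_normal_distribution))"
    by (intro sum.cong refl Bochner_Integration.integral_sum integrable)
  finally show ?thesis
    using assms by (simp add: integral_std_normal_coordinates_power_mult)
qed

lemma integral_std_normal_linear_form_power2:
  assumes "a \<in> I" "b \<in> I" "a \<noteq> b"
  shows "(\<integral>x. (d + p * x a + q * x b) ^ 2 \<partial>PiM I (\<lambda>_. std_normal_distribution)) = d\<^sup>2 + p\<^sup>2 + q\<^sup>2"
  using std_normal_moment_values unfolding integral_std_normal_linear_form_power[OF assms]
  by (simp add: eval_nat_numeral atMost_Suc)

lemma integral_std_normal_linear_form_power4:
  assumes "a \<in> I" "b \<in> I" "a \<noteq> b"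
  shows "(\<integral>x. (d + p * x a + q * x b) ^ 4 \<partial>PiM I (\<lambda>_. std_normal_distribution)) =
    d ^ 4 + 6 * d\<^sup>2 * (p\<^sup>2 + q\<^sup>2) + 3 * (p\<^sup>2 + q\<^sup>2)\<^sup>2"
  using std_normal_moment_values unfolding integral_std_normal_linear_form_power[OF assms]
  by (simp add: eval_nat_numeral atMost_Suc)
    (simp add: algebra_simps eval_nat_numeral)

lemma linear_form_power8_le:
  fixes d p q u v :: real
  shows "(d + p * u + q * v) ^ 8 \<le> 2 ^ 8 * (d ^ 8 + 2 ^ 8 * (p ^ 8 * u ^ 8 + q ^ 8 * v ^ 8))"
proof -
  have "\<bar>d + (p * u + q * v)\<bar> ^ 8 \<le> 2 ^ 8 * (\<bar>d\<bar> ^ 8 + \<bar>p * u + q * v\<bar> ^ 8)"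
    by (rule abs_add_power_le)
  also have "\<bar>p * u + q * v\<bar> ^ 8 \<le> 2 ^ 8 * (\<bar>p * u\<bar> ^ 8 + \<bar>q * v\<bar> ^ 8)"
    by (rule abs_add_power_le)
  finally show ?thesis
    by (simp add: add.assoc power_mult_distrib)
qed

lemma integral_std_normal_linear_form_power8_le:
  assumes "a \<in> I" "b \<in> I"
  shows "(\<integral>x. (d + p * x a + q * x b) ^ 8 \<partial>PiM I (\<lambda>_. std_normal_distribution)) \<le>
    2 ^ 8 * (d ^ 8 + 2 ^ 8 * 105 * (p ^ 8 + q ^ 8))"
proof -
  let ?N = "PiM I (\<lambda>_. std_normal_distribution)"
  interpret N: prob_space ?N
    by (intro prob_space_PiM prob_space_std_normal_distribution)
  have finite: "finite_measure ?N"
    by (rule N.finite_measure)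
  have moments: "finite_moments ?N (\<lambda>x. x a ^ 8)" "finite_moments ?N (\<lambda>x. x b ^ 8)"
    using assms by (auto intro: finite_moments_std_normal_coordinate_power)
  have "(\<integral>x. (d + p * x a + q * x b) ^ 8 \<partial>?N) \<le>
      (\<integral>x. 2 ^ 8 * (d ^ 8 + 2 ^ 8 * (p ^ 8 * x a ^ 8 + q ^ 8 * x b ^ 8)) \<partial>?N)"
  proof (rule integral_mono)
    show "integrable ?N (\<lambda>x. (d + p * x a + q * x b) ^ 8)"
      using assms finite by (intro finite_moments_integrable finite_moments_power finite_moments_add
          finite_moments_mult finite_moments_const finite_moments_std_normal_coordinate_power[of _ _ 1, simplified])
    show "integrable ?N (\<lambda>x. 2 ^ 8 * (d ^ 8 + 2 ^ 8 * (p ^ 8 * x a ^ 8 + q ^ 8 * x b ^ 8)))"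
      using moments finite by (intro finite_moments_integrable finite_moments_add finite_moments_mult
          finite_moments_const)
  qed (rule linear_form_power8_le)
  also have "\<dots> = 2 ^ 8 * (d ^ 8 + 2 ^ 8 * (p ^ 8 * 105 + q ^ 8 * 105))"
    using assms moments[THEN finite_moments_integrable]
    by (simp add: integral_std_normal_coordinate_power std_normal_moment_values N.prob_space)
  also have "\<dots> = 2 ^ 8 * (d ^ 8 + 2 ^ 8 * 105 * (p ^ 8 + q ^ 8))"
    by (simp add: algebra_simps)
  finally show ?thesis .
qed

section \<open>Sums of finitely dependent random variables\<close>

lemma card_nat_neighbourhood_le: "card {j \<in> I. i \<le> j + m \<and> j \<le> i + m} \<le> 2 * m + 1" for I :: "nat set"
proof -
  have "card {j \<in> I. i \<le> j + m \<and> j \<le> i + m} \<le> card {i - m..i + m}"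
    by (intro card_mono) auto
  then show ?thesis
    by simp
qed

lemma (in prob_space) expectation_centered_mult:
  assumes "finite_moments M X" "finite_moments M Y"
  shows "expectation (\<lambda>x. (X x - expectation X) * (Y x - expectation Y)) =
    expectation (\<lambda>x. X x * Y x) - expectation X * expectation Y"
  using finite_moments_integrable[OF assms(1)] finite_moments_integrable[OF assms(2)]
    finite_moments_integrable[OF finite_moments_mult[OF assms]]
  by (simp add: algebra_simps prob_space)

lemma (in prob_space) expectation_centered_mult_le:
  assumes "finite_moments M X" "finite_moments M Y"
  shows "2 * expectation (\<lambda>x. (X x - expectation X) * (Y x - expectation Y)) \<le>
    expectation (\<lambda>x. (X x)\<^sup>2) + expectation (\<lambda>x. (Y x)\<^sup>2)"
proof -
  let ?X = "\<lambda>x. X x - expectation X" and ?Y = "\<lambda>x. Y x - expectation Y"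
  have centered: "finite_moments M ?X" "finite_moments M ?Y"
    by (intro finite_moments_diff finite_moments_const[OF finite_measure] assms)+
  have square: "expectation (\<lambda>x. (Z x - expectation Z)\<^sup>2) \<le> expectation (\<lambda>x. (Z x)\<^sup>2)"
    if "finite_moments M Z" for Z
    using variance_eq[OF finite_moments_integrable[OF that]
        finite_moments_integrable[OF finite_moments_power[OF finite_measure that]]] by simp
  have "2 * expectation (\<lambda>x. ?X x * ?Y x) = expectation (\<lambda>x. 2 * (?X x * ?Y x))"
    by simp
  also have "\<dots> \<le> expectation (\<lambda>x. (?X x)\<^sup>2 + (?Y x)\<^sup>2)"
    using centered
    by (intro integral_mono finite_moments_integrable finite_moments_mult finite_moments_add
        finite_moments_power finite_moments_const finite_measure sum_squares_bound[simplified mult.assoc])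
  also have "\<dots> = expectation (\<lambda>x. (?X x)\<^sup>2) + expectation (\<lambda>x. (?Y x)\<^sup>2)"
    using centered by (intro Bochner_Integration.integral_add finite_moments_integrable finite_moments_power finite_measure)
  also have "\<dots> \<le> expectation (\<lambda>x. (X x)\<^sup>2) + expectation (\<lambda>x. (Y x)\<^sup>2)"
    using square[OF assms(1)] square[OF assms(2)] by simp
  finally show ?thesis .
qed

lemma (in prob_space) expectation_centered_sum_square_le:
  fixes X :: "nat \<Rightarrow> 'a \<Rightarrow> real" and m :: nat and K :: real
  assumes "finite I"
    and moments: "\<And>i. i \<in> I \<Longrightarrow> finite_moments M (X i)"
    and bound: "\<And>i. i \<in> I \<Longrightarrow> expectation (\<lambda>x. (X i x)\<^sup>2) \<le> K"
    and uncorrelated: "\<And>i j. i \<in> I \<Longrightarrow> j \<in> I \<Longrightarrow> i + m < j \<Longrightarrow>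
      expectation (\<lambda>x. X i x * X j x) = expectation (X i) * expectation (X j)"
  shows "expectation (\<lambda>x. (\<Sum>i\<in>I. X i x - expectation (X i))\<^sup>2) \<le> (2 * m + 1) * K * card I"
proof -
  define C where "C i j = expectation (\<lambda>x. (X i x - expectation (X i)) * (X j x - expectation (X j)))" for i j
  have integrable: "integrable M (\<lambda>x. (X i x - expectation (X i)) * (X j x - expectation (X j)))"
    if "i \<in> I" "j \<in> I" for i j
    using moments that
    by (intro finite_moments_integrable finite_moments_mult finite_moments_diff finite_moments_const finite_measure)
  have C_far: "C i j = 0" if "i \<in> I" "j \<in> I" "i + m < j \<or> j + m < i" for i j
    using that uncorrelated[of i j] uncorrelated[of j i]
    by (auto simp: C_def expectation_centered_mult moments mult.commute)
  have C_le: "C i j \<le> K" if "i \<in> I" "j \<in> I" for i j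
    using expectation_centered_mult_le[OF moments moments, OF that] bound[OF that(1)] bound[OF that(2)]
    by (simp add: C_def)
  have K_nonneg: "0 \<le> K" if "i \<in> I" for i
  proof -
    have "0 \<le> expectation (\<lambda>x. (X i x)\<^sup>2)"
      by (intro Bochner_Integration.integral_nonneg) simp
    then show ?thesis
      using bound[OF that] by linarith
  qed
  have row: "(\<Sum>j\<in>I. C i j) \<le> (2 * m + 1) * K" if "i \<in> I" for i
  proof -
    have "(\<Sum>j\<in>I. C i j) = (\<Sum>j\<in>{j \<in> I. i \<le> j + m \<and> j \<le> i + m}. C i j)"
      using \<open>finite I\<close> that by (intro sum.mono_neutral_right) (auto, (metis C_far not_le)+)
    also have "\<dots> \<le> card {j \<in> I. i \<le> j + m \<and> j \<le> i + m} * K"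
      using C_le that by (intro sum_bounded_above) auto
    also have "\<dots> \<le> (2 * m + 1) * K"
      using card_nat_neighbourhood_le[of I i m] K_nonneg[OF that]
      by (intro mult_right_mono) (auto simp flip: of_nat_le_iff)
    finally show ?thesis .
  qed
  have "expectation (\<lambda>x. (\<Sum>i\<in>I. X i x - expectation (X i))\<^sup>2) =
      expectation (\<lambda>x. \<Sum>i\<in>I. \<Sum>j\<in>I. (X i x - expectation (X i)) * (X j x - expectation (X j)))"
    by (simp add: power2_eq_square sum_product)
  also have "\<dots> = (\<Sum>i\<in>I. \<Sum>j\<in>I. C i j)"
    unfolding C_def using integrable
    by (simp add: Bochner_Integration.integral_sum Bochner_Integration.integrable_sum)
  also have "\<dots> \<le> (\<Sum>i\<in>I. (2 * m + 1) * K)"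
    by (intro sum_mono row)
  finally show ?thesis
    by (simp add: mult.commute)
qed

section \<open>The difference estimator\<close>

lemma prob_space_noise_measure: "prob_space (noise_measure n)"
  unfolding noise_measure_def by (intro prob_space_PiM prob_space_std_normal_distribution)

text \<open>The shape \<open>d + p * x a + q * x b\<close> is that of the Gaussian linear forms above.\<close>

lemma Rt_eq: "Rt n f V \<xi> i = deltat n f i + sqrt (V (i + 2)) * \<xi> (i + 2) + (- sqrt (V i)) * \<xi> i"
  by (simp add: Rt_def obsY_def deltat_def)

lemma Rt_restrict: "i \<in> A \<Longrightarrow> i + 2 \<in> A \<Longrightarrow> Rt n f V (restrict \<xi> A) i = Rt n f V \<xi> i"
  by (simp add: Rt_eq)

lemma Rt_measurable:
  assumes "i \<in> A" "i + 2 \<in> A"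
  shows "(\<lambda>\<xi>. Rt n f V \<xi> i) \<in> borel_measurable (PiM A (\<lambda>_. std_normal_distribution))"
proof -
  have [measurable]: "(\<lambda>\<xi>. \<xi> k) \<in> borel_measurable (PiM A (\<lambda>_. std_normal_distribution))" if "k \<in> A" for k
    using measurable_component_singleton[OF that, of "\<lambda>_. std_normal_distribution"] by simp
  show ?thesis
    unfolding Rt_eq using assms by measurable
qed

lemma finite_moments_Rt:
  assumes "1 \<le> i" "i + 2 \<le> n"
  shows "finite_moments (noise_measure n) (\<lambda>\<xi>. Rt n f V \<xi> i)"
  unfolding Rt_eq using assms prob_space.finite_measure[OF prob_space_noise_measure, of n]
    finite_moments_std_normal_coordinate_power[of _ "{1..n}" 1]
  by (intro finite_moments_add finite_moments_mult finite_moments_const) (auto simp: noise_measure_def)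

lemma integral_Rt_power2:
  assumes "1 \<le> i" "i + 2 \<le> n" "0 \<le> V i" "0 \<le> V (i + 2)"
  shows "(\<integral>\<xi>. Rt n f V \<xi> i ^ 2 \<partial>noise_measure n) = (deltat n f i)\<^sup>2 + Wt V i"
  unfolding Rt_eq noise_measure_def using assms
  by (subst integral_std_normal_linear_form_power2) (auto simp: Wt_def)

lemma integral_Rt_power4:
  assumes "1 \<le> i" "i + 2 \<le> n" "0 \<le> V i" "0 \<le> V (i + 2)"
  shows "(\<integral>\<xi>. Rt n f V \<xi> i ^ 4 \<partial>noise_measure n) =
    deltat n f i ^ 4 + 6 * (deltat n f i)\<^sup>2 * Wt V i + 3 * (Wt V i)\<^sup>2"
  unfolding Rt_eq noise_measure_def using assms
  by (subst integral_std_normal_linear_form_power4) (auto simp: Wt_def)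

lemma integral_Rt_power8_le:
  assumes "1 \<le> i" "i + 2 \<le> n" "0 \<le> V i" "0 \<le> V (i + 2)"
    and "\<bar>deltat n f i\<bar> \<le> B" "sqrt (V i) \<le> B" "sqrt (V (i + 2)) \<le> B"
  shows "(\<integral>\<xi>. Rt n f V \<xi> i ^ 8 \<partial>noise_measure n) \<le> 2 ^ 8 * (1 + 2 ^ 9 * 105) * B ^ 8"
proof -
  have "\<bar>x\<bar> ^ 8 \<le> B ^ 8" if "\<bar>x\<bar> \<le> B" for x :: real
    using that by (intro power_mono) auto
  then have "deltat n f i ^ 8 \<le> B ^ 8" "sqrt (V i) ^ 8 \<le> B ^ 8" "sqrt (V (i + 2)) ^ 8 \<le> B ^ 8"
    using assms(3-7) by auto
  moreover have "(\<integral>\<xi>. Rt n f V \<xi> i ^ 8 \<partial>noise_measure n) \<le>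
      2 ^ 8 * (deltat n f i ^ 8 + 2 ^ 8 * 105 * (sqrt (V (i + 2)) ^ 8 + (- sqrt (V i)) ^ 8))"
    unfolding Rt_eq noise_measure_def using assms(1,2)
    by (intro integral_std_normal_linear_form_power8_le) auto
  ultimately show ?thesis
    by simp
qed

definition T2_hat_summand :: "nat \<Rightarrow> (real \<Rightarrow> real) \<Rightarrow> (nat \<Rightarrow> real) \<Rightarrow> (nat \<Rightarrow> real) \<Rightarrow> nat \<Rightarrow> real" where
  "T2_hat_summand n f V \<xi> i = (1/3) * (Rt n f V \<xi> (i+1) ^ 4 + Rt n f V \<xi> i ^ 4)
      - 2 * Rt n f V \<xi> (i+1) ^ 2 * Rt n f V \<xi> i ^ 2"

definition T2_tilde_summand :: "nat \<Rightarrow> (real \<Rightarrow> real) \<Rightarrow> (nat \<Rightarrow> real) \<Rightarrow> nat \<Rightarrow> real" where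
  "T2_tilde_summand n f V i = (Wt V (i+1) + (deltat n f (i+1))^2 - Wt V i - (deltat n f i)^2) ^ 2"

lemma T2_hat_eq_sum: "T2_hat n f V \<xi> = (1 / real n) * (\<Sum>i = 1..n - 3. T2_hat_summand n f V \<xi> i)"
  unfolding T2_hat_def T2_hat_summand_def ..

lemma T2_tilde_eq_sum: "T2_tilde n f V = (1 / real n) * (\<Sum>i = 1..n - 3. T2_tilde_summand n f V i)"
  unfolding T2_tilde_def T2_tilde_summand_def ..

lemma T2_hat_summand_restrict:
  "{i..i + 3} \<subseteq> A \<Longrightarrow> T2_hat_summand n f V (restrict \<xi> A) i = T2_hat_summand n f V \<xi> i"
  unfolding T2_hat_summand_def by (subst (1 2) Rt_restrict; auto)+

lemma T2_hat_summand_measurable: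
  assumes "{i..i + 3} \<subseteq> A"
  shows "(\<lambda>\<xi>. T2_hat_summand n f V \<xi> i) \<in> borel_measurable (PiM A (\<lambda>_. std_normal_distribution))"
proof -
  have [measurable]: "(\<lambda>\<xi>. Rt n f V \<xi> i) \<in> borel_measurable (PiM A (\<lambda>_. std_normal_distribution))"
    "(\<lambda>\<xi>. Rt n f V \<xi> (i + 1)) \<in> borel_measurable (PiM A (\<lambda>_. std_normal_distribution))"
    using assms by (auto intro!: Rt_measurable)
  show ?thesis
    unfolding T2_hat_summand_def by measurable
qed

lemma finite_moments_T2_hat_summand:
  assumes "1 \<le> i" "i + 3 \<le> n"
  shows "finite_moments (noise_measure n) (\<lambda>\<xi>. T2_hat_summand n f V \<xi> i)"
proof -
  note finite = prob_space.finite_measure[OF prob_space_noise_measure]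
  have "finite_moments (noise_measure n) (\<lambda>\<xi>. Rt n f V \<xi> k ^ m)" if "k \<in> {i, i + 1}" for k m
    using assms that by (intro finite_moments_power[OF finite] finite_moments_Rt) auto
  then show ?thesis
    unfolding T2_hat_summand_def
    by (intro finite_moments_diff finite_moments_mult finite_moments_add finite_moments_const[OF finite]) auto
qed

lemma integral_Rt_square_mult:
  assumes "1 \<le> i" "i + 3 \<le> n"
  shows "(\<integral>\<xi>. Rt n f V \<xi> (i + 1) ^ 2 * Rt n f V \<xi> i ^ 2 \<partial>noise_measure n) =
    (\<integral>\<xi>. Rt n f V \<xi> (i + 1) ^ 2 \<partial>noise_measure n) * (\<integral>\<xi>. Rt n f V \<xi> i ^ 2 \<partial>noise_measure n)"
  unfolding noise_measure_def
proof (rule integral_PiM_mult_disjoint[where A = "{i + 1, i + 3}" and B = "{i, i + 2}"])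
  have [measurable]: "(\<lambda>\<xi>. Rt n f V \<xi> (i + 1)) \<in> borel_measurable (PiM {i + 1, i + 3} (\<lambda>_. std_normal_distribution))"
    "(\<lambda>\<xi>. Rt n f V \<xi> i) \<in> borel_measurable (PiM {i, i + 2} (\<lambda>_. std_normal_distribution))"
    by (auto intro!: Rt_measurable)
  show "(\<lambda>\<xi>. Rt n f V \<xi> (i + 1) ^ 2) \<in> borel_measurable (PiM {i + 1, i + 3} (\<lambda>_. std_normal_distribution))"
    "(\<lambda>\<xi>. Rt n f V \<xi> i ^ 2) \<in> borel_measurable (PiM {i, i + 2} (\<lambda>_. std_normal_distribution))"
    by measurable
  have "finite_moments (noise_measure n) (\<lambda>\<xi>. Rt n f V \<xi> k ^ 2)" if "k \<in> {i, i + 1}" for k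
    using assms that
    by (intro finite_moments_power prob_space.finite_measure[OF prob_space_noise_measure] finite_moments_Rt) auto
  then show "integrable (PiM {1..n} (\<lambda>_. std_normal_distribution)) (\<lambda>\<xi>. Rt n f V \<xi> (i + 1) ^ 2)"
    "integrable (PiM {1..n} (\<lambda>_. std_normal_distribution)) (\<lambda>\<xi>. Rt n f V \<xi> i ^ 2)"
    unfolding noise_measure_def by (auto intro: finite_moments_integrable)
qed (use assms in \<open>auto simp: prob_space_std_normal_distribution Rt_restrict\<close>)

lemma integral_T2_hat_summand:
  assumes "1 \<le> i" "i + 3 \<le> n" "\<forall>k\<in>{1..n}. 0 \<le> V k"
  shows "(\<integral>\<xi>. T2_hat_summand n f V \<xi> i \<partial>noise_measure n) =
    T2_tilde_summand n f V i - 2/3 * (deltat n f (i + 1) ^ 4 + deltat n f i ^ 4)"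
proof -
  note finite = prob_space.finite_measure[OF prob_space_noise_measure]
  have moments: "finite_moments (noise_measure n) (\<lambda>\<xi>. Rt n f V \<xi> k ^ m)" if "k \<in> {i, i + 1}" for k m
    using assms that by (intro finite_moments_power[OF finite] finite_moments_Rt) auto
  have "integrable (noise_measure n) (\<lambda>\<xi>. Rt n f V \<xi> (i + 1) ^ 2 * Rt n f V \<xi> i ^ 2)"
    using moments by (intro finite_moments_integrable finite_moments_mult) auto
  then have "(\<integral>\<xi>. T2_hat_summand n f V \<xi> i \<partial>noise_measure n) =
      1/3 * ((\<integral>\<xi>. Rt n f V \<xi> (i + 1) ^ 4 \<partial>noise_measure n) + (\<integral>\<xi>. Rt n f V \<xi> i ^ 4 \<partial>noise_measure n))
      - 2 * (\<integral>\<xi>. Rt n f V \<xi> (i + 1) ^ 2 * Rt n f V \<xi> i ^ 2 \<partial>noise_measure n)"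
    using moments[THEN finite_moments_integrable]
    unfolding T2_hat_summand_def by (simp add: mult.assoc)
  also have "\<dots> = T2_tilde_summand n f V i - 2/3 * (deltat n f (i + 1) ^ 4 + deltat n f i ^ 4)"
  proof -
    have V: "0 \<le> V k" if "k \<in> {i..i + 3}" for k
      using assms that by auto
    have power2: "(\<integral>\<xi>. Rt n f V \<xi> k ^ 2 \<partial>noise_measure n) = (deltat n f k)\<^sup>2 + Wt V k"
      and power4: "(\<integral>\<xi>. Rt n f V \<xi> k ^ 4 \<partial>noise_measure n) =
        deltat n f k ^ 4 + 6 * (deltat n f k)\<^sup>2 * Wt V k + 3 * (Wt V k)\<^sup>2" if "k \<in> {i, i + 1}" for k
      using assms that V by (auto intro!: integral_Rt_power2 integral_Rt_power4)
    show ?thesis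
      by (simp only: integral_Rt_square_mult[OF assms(1,2)] power2 power4 insert_iff simp_thms)
        (simp add: T2_tilde_summand_def power2_eq_square power4_eq_xxxx algebra_simps)
  qed
  finally show ?thesis .
qed

lemma quartic_form_square_le:
  fixes a b :: real
  shows "(1/3 * (a ^ 4 + b ^ 4) - 2 * a\<^sup>2 * b\<^sup>2)\<^sup>2 \<le> 2 * (a ^ 8 + b ^ 8)"
proof -
  define x y where "x = a\<^sup>2" and "y = b\<^sup>2"
  have "0 \<le> x * y" "2 * (x * y) \<le> x\<^sup>2 + y\<^sup>2"
    using sum_squares_bound[of x y] by (simp_all add: x_def y_def mult.assoc)
  moreover have "\<bar>1/3 * s - 2 * p\<bar> \<le> s" if "0 \<le> p" "2 * p \<le> s" for s p :: real
    using that by (simp add: abs_le_iff)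
  ultimately have "\<bar>1/3 * (x\<^sup>2 + y\<^sup>2) - 2 * (x * y)\<bar> \<le> x\<^sup>2 + y\<^sup>2"
    by blast
  then have "(1/3 * (x\<^sup>2 + y\<^sup>2) - 2 * (x * y))\<^sup>2 \<le> (x\<^sup>2 + y\<^sup>2)\<^sup>2"
    by (metis abs_ge_zero power2_abs power_mono)
  also have "\<dots> \<le> 2 * ((x\<^sup>2)\<^sup>2 + (y\<^sup>2)\<^sup>2)"
    using sum_squares_bound[of "x\<^sup>2" "y\<^sup>2"] by (simp add: power2_sum)
  finally show ?thesis
    by (simp add: x_def y_def mult.assoc flip: power_mult)
qed

lemma integral_T2_hat_summand_square_le:
  assumes "1 \<le> i" "i + 3 \<le> n"
    and "\<And>k. k \<in> {i, i + 1} \<Longrightarrow> (\<integral>\<xi>. Rt n f V \<xi> k ^ 8 \<partial>noise_measure n) \<le> K"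
  shows "(\<integral>\<xi>. (T2_hat_summand n f V \<xi> i)\<^sup>2 \<partial>noise_measure n) \<le> 4 * K"
proof -
  note finite = prob_space.finite_measure[OF prob_space_noise_measure]
  have moments: "finite_moments (noise_measure n) (\<lambda>\<xi>. Rt n f V \<xi> k ^ 8)" if "k \<in> {i, i + 1}" for k
    using assms that by (intro finite_moments_power[OF finite] finite_moments_Rt) auto
  have "(\<integral>\<xi>. (T2_hat_summand n f V \<xi> i)\<^sup>2 \<partial>noise_measure n) \<le>
      (\<integral>\<xi>. 2 * (Rt n f V \<xi> (i + 1) ^ 8 + Rt n f V \<xi> i ^ 8) \<partial>noise_measure n)"
  proof (rule integral_mono)
    show "integrable (noise_measure n) (\<lambda>\<xi>. (T2_hat_summand n f V \<xi> i)\<^sup>2)"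
      using assms by (intro finite_moments_integrable finite_moments_power[OF finite] finite_moments_T2_hat_summand)
    show "integrable (noise_measure n) (\<lambda>\<xi>. 2 * (Rt n f V \<xi> (i + 1) ^ 8 + Rt n f V \<xi> i ^ 8))"
      using moments by (intro integrable_mult_right Bochner_Integration.integrable_add finite_moments_integrable) auto
  qed (unfold T2_hat_summand_def, rule quartic_form_square_le)
  also have "\<dots> = 2 * ((\<integral>\<xi>. Rt n f V \<xi> (i + 1) ^ 8 \<partial>noise_measure n) + (\<integral>\<xi>. Rt n f V \<xi> i ^ 8 \<partial>noise_measure n))"
    using moments[THEN finite_moments_integrable] by simp
  also have "\<dots> \<le> 4 * K"
    using assms(3)[of i] assms(3)[of "i + 1"] by simp
  finally show ?thesis .
qed

lemma integral_T2_hat_summand_mult: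
  assumes "1 \<le> i" "i + 3 < j" "j + 3 \<le> n"
  shows "(\<integral>\<xi>. T2_hat_summand n f V \<xi> i * T2_hat_summand n f V \<xi> j \<partial>noise_measure n) =
    (\<integral>\<xi>. T2_hat_summand n f V \<xi> i \<partial>noise_measure n) * (\<integral>\<xi>. T2_hat_summand n f V \<xi> j \<partial>noise_measure n)"
proof -
  have "integrable (noise_measure n) (\<lambda>\<xi>. T2_hat_summand n f V \<xi> k)" if "k \<in> {i, j}" for k
    using assms that by (intro finite_moments_integrable finite_moments_T2_hat_summand) auto
  then show ?thesis
    unfolding noise_measure_def using assms
    by (intro integral_PiM_mult_disjoint[where A = "{i..i + 3}" and B = "{j..j + 3}"])
      (auto simp: prob_space_std_normal_distribution T2_hat_summand_restrict intro: T2_hat_summand_measurable)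
qed

lemma integral_T2_hat_centered_sum_square_le:
  assumes "0 \<le> K"
    and moment8: "\<And>i. 1 \<le> i \<Longrightarrow> i + 2 \<le> n \<Longrightarrow> (\<integral>\<xi>. Rt n f V \<xi> i ^ 8 \<partial>noise_measure n) \<le> K"
  shows "(\<integral>\<xi>. (\<Sum>i = 1..n - 3. T2_hat_summand n f V \<xi> i -
      (\<integral>\<xi>. T2_hat_summand n f V \<xi> i \<partial>noise_measure n))\<^sup>2 \<partial>noise_measure n) \<le> 28 * K * n"
proof -
  interpret P: prob_space "noise_measure n"
    by (rule prob_space_noise_measure)
  have "P.expectation (\<lambda>\<xi>. (\<Sum>i = 1..n - 3. T2_hat_summand n f V \<xi> i -
      P.expectation (\<lambda>\<xi>. T2_hat_summand n f V \<xi> i))\<^sup>2) \<le> real (2 * 3 + 1) * (4 * K) * card {1..n - 3}"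
  proof (rule P.expectation_centered_sum_square_le)
    fix i j
    assume "i \<in> {1..n - 3}" "j \<in> {1..n - 3}" "i + 3 < j"
    then show "P.expectation (\<lambda>\<xi>. T2_hat_summand n f V \<xi> i * T2_hat_summand n f V \<xi> j) =
        P.expectation (\<lambda>\<xi>. T2_hat_summand n f V \<xi> i) * P.expectation (\<lambda>\<xi>. T2_hat_summand n f V \<xi> j)"
      by (intro integral_T2_hat_summand_mult) auto
  qed (auto intro!: finite_moments_T2_hat_summand integral_T2_hat_summand_square_le moment8)
  also have "\<dots> = 28 * K * card {1..n - 3}"
    by simp
  also have "\<dots> \<le> 28 * K * n"
    using \<open>0 \<le> K\<close> by (intro mult_left_mono) auto
  finally show ?thesis .
qed

lemma T2_bias_abs_le:
  assumes V: "\<forall>k\<in>{1..n}. 0 \<le> V k"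
    and delta: "\<And>i. 1 \<le> i \<Longrightarrow> i + 2 \<le> n \<Longrightarrow> \<bar>deltat n f i\<bar> \<le> D"
  shows "\<bar>\<Sum>i = 1..n - 3. (\<integral>\<xi>. T2_hat_summand n f V \<xi> i \<partial>noise_measure n) - T2_tilde_summand n f V i\<bar>
    \<le> n * (4/3 * D ^ 4)"
proof -
  have "\<bar>(\<integral>\<xi>. T2_hat_summand n f V \<xi> i \<partial>noise_measure n) - T2_tilde_summand n f V i\<bar> \<le> 4/3 * D ^ 4"
    if "i \<in> {1..n - 3}" for i
  proof -
    have i: "1 \<le> i" "i + 3 \<le> n"
      using that by auto
    have "deltat n f k ^ 4 \<le> D ^ 4" if "1 \<le> k" "k + 2 \<le> n" for k
      using delta[OF that] power_mono[of "\<bar>deltat n f k\<bar>" D 4] by auto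
    then have "deltat n f i ^ 4 \<le> D ^ 4" "deltat n f (i + 1) ^ 4 \<le> D ^ 4"
      using i by auto
    then show ?thesis
      by (simp add: integral_T2_hat_summand[OF i V])
  qed
  then have "\<bar>\<Sum>i = 1..n - 3. (\<integral>\<xi>. T2_hat_summand n f V \<xi> i \<partial>noise_measure n) - T2_tilde_summand n f V i\<bar>
      \<le> card {1..n - 3} * (4/3 * D ^ 4)"
    by (intro order_trans[OF sum_abs] sum_bounded_above)
  also have "\<dots> \<le> n * (4/3 * D ^ 4)"
    by (intro mult_right_mono) auto
  finally show ?thesis .
qed

lemma square_add_le: "(x + y)\<^sup>2 \<le> 2 * x\<^sup>2 + 2 * y\<^sup>2" for x y :: real
  using sum_squares_bound[of x y] by (simp add: power2_sum)

lemma finite_moments_T2_hat: "finite_moments (noise_measure n) (T2_hat n f V)"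
  unfolding T2_hat_eq_sum
  by (intro finite_moments_mult finite_moments_sum finite_moments_const finite_moments_T2_hat_summand
      prob_space.finite_measure[OF prob_space_noise_measure]) auto

lemma integral_T2_error_le:
  assumes "1 \<le> n" "0 \<le> K" and V: "\<forall>k\<in>{1..n}. 0 \<le> V k"
    and moment8: "\<And>i. 1 \<le> i \<Longrightarrow> i + 2 \<le> n \<Longrightarrow> (\<integral>\<xi>. Rt n f V \<xi> i ^ 8 \<partial>noise_measure n) \<le> K"
    and delta: "\<And>i. 1 \<le> i \<Longrightarrow> i + 2 \<le> n \<Longrightarrow> \<bar>deltat n f i\<bar> \<le> D"
  shows "(\<integral>\<xi>. (T2_hat n f V \<xi> - T2_tilde n f V)\<^sup>2 \<partial>noise_measure n) \<le> 56 * K / n + 32/9 * D ^ 8"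
proof -
  interpret P: prob_space "noise_measure n"
    by (rule prob_space_noise_measure)
  define S where "S \<xi> = (\<Sum>i = 1..n - 3. T2_hat_summand n f V \<xi> i - P.expectation (\<lambda>\<xi>. T2_hat_summand n f V \<xi> i))"
    for \<xi>
  define b where "b = (\<Sum>i = 1..n - 3. P.expectation (\<lambda>\<xi>. T2_hat_summand n f V \<xi> i) - T2_tilde_summand n f V i)"
  have split: "T2_hat n f V \<xi> - T2_tilde n f V = S \<xi> / n + b / n" for \<xi>
    unfolding T2_hat_eq_sum T2_tilde_eq_sum S_def b_def sum_subtractf by (simp add: diff_divide_distrib)
  have S: "finite_moments (noise_measure n) S"
    unfolding S_def
    by (intro finite_moments_sum finite_moments_diff finite_moments_const finite_moments_T2_hat_summand P.finite_measure) auto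
  then have S_scaled: "finite_moments (noise_measure n) (\<lambda>\<xi>. S \<xi> / n)"
    using finite_moments_mult[OF _ finite_moments_const[OF P.finite_measure, of "1 / n"]] by simp
  have "P.expectation (\<lambda>\<xi>. (T2_hat n f V \<xi> - T2_tilde n f V)\<^sup>2) \<le> P.expectation (\<lambda>\<xi>. 2 * (S \<xi> / n)\<^sup>2 + 2 * (b / n)\<^sup>2)"
    unfolding split using S_scaled
    by (intro integral_mono square_add_le finite_moments_integrable finite_moments_add finite_moments_mult
        finite_moments_power finite_moments_const P.finite_measure)
  also have "\<dots> = 2 / n\<^sup>2 * P.expectation (\<lambda>\<xi>. (S \<xi>)\<^sup>2) + 2 * (b / n)\<^sup>2"
    using finite_moments_integrable[OF finite_moments_power[OF P.finite_measure S, of 2]]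
    by (simp add: power_divide P.prob_space)
  also have "\<dots> \<le> 2 / n\<^sup>2 * (28 * K * n) + 2 * (4/3 * D ^ 4)\<^sup>2"
  proof (intro add_mono mult_left_mono)
    show "P.expectation (\<lambda>\<xi>. (S \<xi>)\<^sup>2) \<le> 28 * K * n"
      unfolding S_def using assms(2) moment8 by (rule integral_T2_hat_centered_sum_square_le)
    have "\<bar>b / n\<bar> \<le> 4/3 * D ^ 4"
      using T2_bias_abs_le[OF V delta] \<open>1 \<le> n\<close> by (simp add: b_def divide_le_eq mult.commute)
    then show "(b / n)\<^sup>2 \<le> (4/3 * D ^ 4)\<^sup>2"
      by (metis abs_ge_zero power2_abs power_mono)
  qed auto
  also have "\<dots> = 56 * K / n + 32/9 * D ^ 8"
    using \<open>1 \<le> n\<close> by (simp add: power2_eq_square field_simps)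
  finally show ?thesis .
qed

section \<open>Hoelder increments\<close>

lemma holder_class_bounded:
  assumes "f \<in> holder_class \<alpha> M" "x \<in> {0..1}"
  shows "\<bar>f x\<bar> \<le> M"
  using assms unfolding holder_class_def by force

lemma holder_class_increment_le:
  assumes "0 < \<alpha>" "f \<in> holder_class \<alpha> M" and x: "x \<in> {0..1}" and y: "y \<in> {0..1}"
  shows "\<bar>f x - f y\<bar> \<le> M * \<bar>x - y\<bar> powr min \<alpha> 1"
proof -
  obtain D :: "nat \<Rightarrow> real \<Rightarrow> real" where
    D0: "\<forall>x\<in>{0..1}. D 0 x = f x" and
    D_deriv: "\<forall>j < nat \<lfloor>\<alpha>\<rfloor>. \<forall>x\<in>{0..1}. (D j has_real_derivative D (Suc j) x) (at x within {0..1})" and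
    D_bound: "\<forall>j \<le> nat \<lfloor>\<alpha>\<rfloor>. \<forall>x\<in>{0..1}. \<bar>D j x\<bar> \<le> M" and
    D_holder: "\<forall>x\<in>{0..1}. \<forall>y\<in>{0..1}.
      \<bar>D (nat \<lfloor>\<alpha>\<rfloor>) x - D (nat \<lfloor>\<alpha>\<rfloor>) y\<bar> \<le> M * \<bar>x - y\<bar> powr (\<alpha> - of_int \<lfloor>\<alpha>\<rfloor>)"
    using assms(2) unfolding holder_class_def by blast
  show ?thesis
  proof (cases "\<alpha> < 1")
    case True
    then have "\<lfloor>\<alpha>\<rfloor> = 0"
      using assms(1) by (simp add: floor_eq_iff)
    then show ?thesis
      using D_holder D0 x y True by force
  next
    case False
    then have "1 \<le> nat \<lfloor>\<alpha>\<rfloor>"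
      by (simp add: le_nat_iff)
    then have "(D 0 has_field_derivative D 1 z) (at z within {0..1})" "norm (D 1 z) \<le> M"
      if "z \<in> {0..1}" for z
      using D_deriv D_bound that by force+
    then have "norm (D 0 x - D 0 y) \<le> M * norm (x - y)"
      using field_differentiable_bound[OF convex_real_interval(5) _ _ x y] by blast
    then show ?thesis
      using D0 x y False by simp
  qed
qed

lemma deltat_abs_le:
  assumes "f \<in> holder_class \<alpha> M" "1 \<le> n" "i + 2 \<le> n"
  shows "\<bar>deltat n f i\<bar> \<le> 2 * M"
proof -
  have "real (i + 2) / n \<in> {0..1}" "real i / n \<in> {0..1}"
    using assms(2,3) by (auto simp: divide_le_eq)
  then show ?thesis
    unfolding deltat_def using holder_class_bounded[OF assms(1)] by (smt (verit))
qed

lemma deltat_abs_le_powr: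
  assumes "0 < \<alpha>" "f \<in> holder_class \<alpha> M" "1 \<le> n" "i + 2 \<le> n"
  shows "\<bar>deltat n f i\<bar> \<le> 2 * M * real n powr (- min \<alpha> 1)"
proof -
  have "real (i + 2) / n \<in> {0..1}" "real i / n \<in> {0..1}"
    using assms(3,4) by (auto simp: divide_le_eq)
  moreover have "\<bar>real (i + 2) / n - real i / n\<bar> = 2 / n"
    by (simp add: diff_divide_distrib[symmetric])
  ultimately have "\<bar>deltat n f i\<bar> \<le> M * (2 / n) powr min \<alpha> 1"
    unfolding deltat_def using holder_class_increment_le[OF assms(1,2)] by metis
  also have "(2 / n) powr min \<alpha> 1 = 2 powr min \<alpha> 1 * real n powr (- min \<alpha> 1)"
    using assms(3) by (simp add: powr_divide powr_minus_divide)
  also have "M * \<dots> \<le> M * (2 * real n powr (- min \<alpha> 1))"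
    using holder_class_bounded[OF assms(2), of 0] powr_mono[of "min \<alpha> 1" 1 2]
    by (intro mult_left_mono mult_right_mono) auto
  finally show ?thesis
    by simp
qed

lemma powr_min_le:
  fixes \<alpha> x :: real
  assumes "0 < \<alpha>" "1 \<le> x"
  shows "x powr (- 8 * min \<alpha> 1) \<le> 1 / x + x powr (- 8 * \<alpha>)"
proof (cases "\<alpha> \<le> 1")
  case False
  then have "x powr (- 8 * min \<alpha> 1) \<le> x powr (- 1)"
    using assms(2) by (intro powr_mono) auto
  also have "\<dots> = 1 / x"
    using assms(2) by (simp add: powr_minus_divide)
  finally have "x powr (- 8 * min \<alpha> 1) \<le> 1 / x" .
  moreover have "0 \<le> x powr (- 8 * \<alpha>)"
    by simp
  ultimately show ?thesis
    by linarith
qed (use assms(2) in simp)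

definition T2_error_constant :: "real \<Rightarrow> real" where
  "T2_error_constant M = 56 * (2 ^ 8 * (1 + 2 ^ 9 * 105) * (2 * M + sqrt M) ^ 8) + 2 ^ 13 / 9 * M ^ 8"

lemma T2_error_constant_nonneg: "0 \<le> M \<Longrightarrow> 0 \<le> T2_error_constant M"
  by (simp add: T2_error_constant_def)

lemma integral_T2_error_le_holder:
  assumes "0 < \<alpha>" "f \<in> holder_class \<alpha> M" "1 \<le> n" and V: "\<forall>i\<in>{1..n}. 0 \<le> V i \<and> V i \<le> M"
  shows "(\<integral>\<xi>. (T2_hat n f V \<xi> - T2_tilde n f V)\<^sup>2 \<partial>noise_measure n) \<le>
    T2_error_constant M * (1 / n + real n powr (- 8 * \<alpha>))"
proof -
  let ?K = "56 * (2 ^ 8 * (1 + 2 ^ 9 * 105) * (2 * M + sqrt M) ^ 8)"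
  and ?rate = "1 / n + real n powr (- 8 * \<alpha>)"
  have "0 \<le> M"
    using holder_class_bounded[OF assms(2), of 0] by simp
  have "(\<integral>\<xi>. Rt n f V \<xi> i ^ 8 \<partial>noise_measure n) \<le> 2 ^ 8 * (1 + 2 ^ 9 * 105) * (2 * M + sqrt M) ^ 8"
    if "1 \<le> i" "i + 2 \<le> n" for i
  proof (rule integral_Rt_power8_le)
    show "\<bar>deltat n f i\<bar> \<le> 2 * M + sqrt M"
      using deltat_abs_le[OF assms(2,3) that(2)] real_sqrt_ge_zero[OF \<open>0 \<le> M\<close>] by linarith
    have "sqrt (V k) \<le> 2 * M + sqrt M" if "k \<in> {1..n}" for k
      using V that \<open>0 \<le> M\<close> by (auto simp: add_increasing)
    then show "sqrt (V i) \<le> 2 * M + sqrt M" "sqrt (V (i + 2)) \<le> 2 * M + sqrt M"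
      using that by auto
  qed (use V that in auto)
  then have "(\<integral>\<xi>. (T2_hat n f V \<xi> - T2_tilde n f V)\<^sup>2 \<partial>noise_measure n) \<le>
      ?K / n + 32/9 * (2 * M * real n powr (- min \<alpha> 1)) ^ 8"
    using V \<open>0 \<le> M\<close> by (intro integral_T2_error_le deltat_abs_le_powr assms) auto
  also have "(2 * M * real n powr (- min \<alpha> 1)) ^ 8 = 2 ^ 8 * M ^ 8 * real n powr (- 8 * min \<alpha> 1)"
    using assms(3) by (simp add: power_mult_distrib powr_realpow[symmetric] powr_powr mult.commute)
  also have "?K / n + 32/9 * (2 ^ 8 * M ^ 8 * real n powr (- 8 * min \<alpha> 1)) \<le> ?K * ?rate + 2 ^ 13 / 9 * M ^ 8 * ?rate"
  proof (rule add_mono)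
    show "?K / n \<le> ?K * ?rate"
      using \<open>0 \<le> M\<close> by (simp add: divide_inverse mult_left_mono)
    show "32/9 * (2 ^ 8 * M ^ 8 * real n powr (- 8 * min \<alpha> 1)) \<le> 2 ^ 13 / 9 * M ^ 8 * ?rate"
      using powr_min_le[OF assms(1), of n] assms(3) by (simp add: mult_left_mono)
  qed
  finally show ?thesis
    by (simp add: T2_error_constant_def algebra_simps)
qed

lemma nn_integral_T2_error:
  "(\<integral>\<^sup>+ \<xi>. ennreal ((T2_hat n f V \<xi> - T2_tilde n f V)\<^sup>2) \<partial>noise_measure n) =
    ennreal (\<integral>\<xi>. (T2_hat n f V \<xi> - T2_tilde n f V)\<^sup>2 \<partial>noise_measure n)"
  using prob_space.finite_measure[OF prob_space_noise_measure]
  by (intro nn_integral_eq_integral AE_I2 finite_moments_integrable finite_moments_power finite_moments_diff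
      finite_moments_const finite_moments_T2_hat) simp_all

theorem proposition4p5:
  fixes \<alpha> M :: real
  assumes "\<alpha> > 0"
  shows "\<exists>C > 0. \<forall>n :: nat. \<forall>f V. n \<ge> 1 \<longrightarrow> f \<in> holder_class \<alpha> M \<longrightarrow>
           (\<forall>i\<in>{1..n}. 0 \<le> V i \<and> V i \<le> M) \<longrightarrow>
           (\<integral>\<^sup>+ \<xi>. ennreal ((T2_hat n f V \<xi> - T2_tilde n f V) ^ 2) \<partial>noise_measure n)
             \<le> ennreal (C * (1 / real n + real n powr (- 8 * \<alpha>)))"
proof -
  define C where "C = T2_error_constant \<bar>M\<bar> + 1"
  have "C > 0"
    using T2_error_constant_nonneg[of "\<bar>M\<bar>"] by (simp add: C_def)
  moreover have "(\<integral>\<^sup>+ \<xi>. ennreal ((T2_hat n f V \<xi> - T2_tilde n f V)\<^sup>2) \<partial>noise_measure n)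
      \<le> ennreal (C * (1 / real n + real n powr (- 8 * \<alpha>)))"
    if n: "n \<ge> 1" and f: "f \<in> holder_class \<alpha> M" and V: "\<forall>i\<in>{1..n}. 0 \<le> V i \<and> V i \<le> M" for n f V
  proof -
    have "\<bar>M\<bar> = M"
      using holder_class_bounded[OF f, of 0] by simp
    then have "(\<integral>\<xi>. (T2_hat n f V \<xi> - T2_tilde n f V)\<^sup>2 \<partial>noise_measure n) \<le>
        C * (1 / real n + real n powr (- 8 * \<alpha>))"
      using integral_T2_error_le_holder[OF assms f n V] by (simp add: C_def distrib_right add_increasing2)
    then show ?thesis
      by (simp add: nn_integral_T2_error ennreal_leI)
  qed
  ultimately show ?thesis
    by blast
qed

end
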